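(* Let $K$ be a field, $X$ a finite connected poset and $S\subseteq J(I(X,K))$. Then the ideal $\langle S\rangle$ of $I(X,K)$ generated by $S$ coincides with the Lie ideal $\langle S\rangle_L$ of $I(X,K)$ generated by $S$. Consequently, every Lie ideal of $I(X,K)$ contained in $J(I(X,K))$ is an (associative) ideal.
   Context: $I(X,K)$ is the incidence algebra: functions $f:X\times X\to K$ with $f(x,y)=0$ unless $x\le y$, product $(fg)(x,y)=\sum_{x\le t\le y}f(x,t)g(t,y)$, Lie bracket $[f,g]=fg-gf$. $J(I(X,K))=\{f: f(x,x)=0\ \forall x\}$ is the Jacobson radical. Connected means any two elements are joined by a sequence in which consecutive elements are in a covering relation. *)

theory Defs
  imports Main
begin

text \<open>A finite poset is modelled as a finite subset X of a type with a partial order,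
  carrying the induced order. Elements of the incidence algebra I(X,K) are functions
  f :: 'a => 'a => 'k vanishing outside {(x,y). x,y in X, x <= y}.\<close>

definition incidence :: "'a::order set \<Rightarrow> ('a \<Rightarrow> 'a \<Rightarrow> 'k::field) set" where
  "incidence X = {f. \<forall>x y. f x y \<noteq> 0 \<longrightarrow> x \<in> X \<and> y \<in> X \<and> x \<le> y}"

definition inc_mult :: "'a::order set \<Rightarrow> ('a \<Rightarrow> 'a \<Rightarrow> 'k::field) \<Rightarrow> ('a \<Rightarrow> 'a \<Rightarrow> 'k) \<Rightarrow> ('a \<Rightarrow> 'a \<Rightarrow> 'k)" where
  "inc_mult X f g = (\<lambda>x y. \<Sum>t\<in>{t\<in>X. x \<le> t \<and> t \<le> y}. f x t * g t y)"

definition inc_bracket :: "'a::order set \<Rightarrow> ('a \<Rightarrow> 'a \<Rightarrow> 'k::field) \<Rightarrow> ('a \<Rightarrow> 'a \<Rightarrow> 'k) \<Rightarrow> ('a \<Rightarrow> 'a \<Rightarrow> 'k)" where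
  "inc_bracket X f g = (\<lambda>x y. inc_mult X f g x y - inc_mult X g f x y)"

definition jacobson :: "'a::order set \<Rightarrow> ('a \<Rightarrow> 'a \<Rightarrow> 'k::field) set" where
  "jacobson X = {f \<in> incidence X. \<forall>x\<in>X. f x x = 0}"

definition inc_subspace :: "'a::order set \<Rightarrow> ('a \<Rightarrow> 'a \<Rightarrow> 'k::field) set \<Rightarrow> bool" where
  "inc_subspace X A \<longleftrightarrow> A \<subseteq> incidence X \<and> (\<lambda>x y. 0) \<in> A \<and>
     (\<forall>f\<in>A. \<forall>g\<in>A. (\<lambda>x y. f x y + g x y) \<in> A) \<and> (\<forall>c. \<forall>f\<in>A. (\<lambda>x y. c * f x y) \<in> A)"

definition inc_ideal :: "'a::order set \<Rightarrow> ('a \<Rightarrow> 'a \<Rightarrow> 'k::field) set \<Rightarrow> bool" where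
  "inc_ideal X A \<longleftrightarrow> inc_subspace X A \<and>
     (\<forall>f\<in>incidence X. \<forall>g\<in>A. inc_mult X f g \<in> A \<and> inc_mult X g f \<in> A)"

definition inc_lie_ideal :: "'a::order set \<Rightarrow> ('a \<Rightarrow> 'a \<Rightarrow> 'k::field) set \<Rightarrow> bool" where
  "inc_lie_ideal X A \<longleftrightarrow> inc_subspace X A \<and>
     (\<forall>f\<in>incidence X. \<forall>g\<in>A. inc_bracket X f g \<in> A)"

definition ideal_gen :: "'a::order set \<Rightarrow> ('a \<Rightarrow> 'a \<Rightarrow> 'k::field) set \<Rightarrow> ('a \<Rightarrow> 'a \<Rightarrow> 'k) set" where
  "ideal_gen X S = \<Inter>{A. inc_ideal X A \<and> S \<subseteq> A}"

definition lie_ideal_gen :: "'a::order set \<Rightarrow> ('a \<Rightarrow> 'a \<Rightarrow> 'k::field) set \<Rightarrow> ('a \<Rightarrow> 'a \<Rightarrow> 'k) set" where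
  "lie_ideal_gen X S = \<Inter>{A. inc_lie_ideal X A \<and> S \<subseteq> A}"

definition covers :: "'a::order set \<Rightarrow> 'a \<Rightarrow> 'a \<Rightarrow> bool" where
  "covers X x y \<longleftrightarrow> x \<in> X \<and> y \<in> X \<and> x < y \<and> \<not> (\<exists>z\<in>X. x < z \<and> z < y)"

definition poset_connected :: "'a::order set \<Rightarrow> bool" where
  "poset_connected X \<longleftrightarrow>
     (\<forall>x\<in>X. \<forall>y\<in>X. (\<lambda>u v. covers X u v \<or> covers X v u)\<^sup>*\<^sup>* x y)"

end

theory Submission
  imports Defs
begin

text \<open>Write e_ab for the matrix unit inc_single a b 1. Let L be a Lie ideal contained in J.
  For f in L and x < y, bracketing f first with the idempotent e_xx and then with e_yy
  isolates the single entry f(x,y) e_xy in L, and a further bracket with e_ax (a \<le> x) moves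
  it to f(x,y) e_ay. Since f vanishes on the diagonal, the product g f is the sum of the terms
  g(a,b) f(b,c) e_ac with a \<le> b < c, so g f lies in L, and then so does f g = g f + [f,g].
  Thus L is an ideal; applied to the Lie ideal generated by S, which stays inside the Lie
  ideal J, this gives the equality of the two generated ideals.\<close>

definition inc_single :: "'a \<Rightarrow> 'a \<Rightarrow> 'k::zero \<Rightarrow> 'a \<Rightarrow> 'a \<Rightarrow> 'k" where
  "inc_single a b c = (\<lambda>u v. if u = a \<and> v = b then c else 0)"

lemma inc_single_zero [simp]: "inc_single a b 0 = (\<lambda>u v. 0)"
  by (simp add: inc_single_def)

lemma inc_single_sum: "inc_single a b (\<Sum>i\<in>I. c i) = (\<lambda>u v. \<Sum>i\<in>I. inc_single a b (c i) u v)"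
  unfolding inc_single_def by (rule ext)+ auto

lemma inc_single_in_incidence:
  "a \<in> X \<Longrightarrow> b \<in> X \<Longrightarrow> a \<le> b \<Longrightarrow> inc_single a b (c::'k::field) \<in> incidence X"
  by (auto simp: inc_single_def incidence_def)

lemma incidence_add:
  assumes "f \<in> incidence X" "g \<in> incidence X"
  shows "(\<lambda>x y. f x y + g x y) \<in> incidence X"
proof -
  have "f x y \<noteq> 0 \<or> g x y \<noteq> 0" if "f x y + g x y \<noteq> 0" for x y
    using that by auto
  then show ?thesis
    using assms unfolding incidence_def by blast
qed

lemma incidence_scale: "f \<in> incidence X \<Longrightarrow> (\<lambda>x y. c * f x y) \<in> incidence X"
  by (auto simp: incidence_def)

lemma incidence_sum_single:
  assumes "finite X" "f \<in> incidence X"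
  shows "f = (\<lambda>p q. \<Sum>a\<in>X. \<Sum>c\<in>X. inc_single a c (f a c) p q)"
proof (intro ext)
  fix p q
  have "(\<Sum>a\<in>X. \<Sum>c\<in>X. inc_single a c (f a c) p q)
      = (\<Sum>a\<in>X. if p = a then (\<Sum>c\<in>X. if q = c then f a c else 0) else 0)"
    by (intro sum.cong) (auto simp: inc_single_def)
  also have "\<dots> = (if p \<in> X \<and> q \<in> X then f p q else 0)"
    using assms(1) by (simp add: sum.delta')
  also have "\<dots> = f p q"
    using assms(2) by (auto simp: incidence_def)
  finally show "f p q = (\<Sum>a\<in>X. \<Sum>c\<in>X. inc_single a c (f a c) p q)" ..
qed

lemma inc_mult_eq_sum:
  assumes "finite X" "f \<in> incidence X" "g \<in> incidence X"
  shows "inc_mult X f g p q = (\<Sum>t\<in>X. f p t * g t q)"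
  unfolding inc_mult_def
  by (rule sum.mono_neutral_left) (use assms in \<open>auto simp: incidence_def\<close>)

lemma inc_mult_in_incidence:
  assumes "f \<in> incidence X" "g \<in> incidence X"
  shows "inc_mult X f g \<in> incidence X"
  unfolding incidence_def
proof (intro CollectI allI impI)
  fix x y assume "inc_mult X f g x y \<noteq> 0"
  then obtain t where "t \<in> {t\<in>X. x \<le> t \<and> t \<le> y}" "f x t * g t y \<noteq> 0"
    unfolding inc_mult_def by (rule sum.not_neutral_contains_not_neutral)
  then have "x \<le> t" "t \<le> y" "f x t \<noteq> 0" "g t y \<noteq> 0"
    by auto
  then show "x \<in> X \<and> y \<in> X \<and> x \<le> y"
    using assms unfolding incidence_def by (blast intro: order_trans)
qed

lemma inc_mult_diag: "x \<in> X \<Longrightarrow> inc_mult X f g x x = f x x * g x x"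
proof -
  assume "x \<in> X"
  then have "{t\<in>X. x \<le> t \<and> t \<le> x} = {x}" by (auto intro: order_antisym)
  then show ?thesis by (simp add: inc_mult_def)
qed

lemma inc_mult_single_left:
  assumes "finite X" "b \<in> X" "a \<le> b"
  shows "inc_mult X (inc_single a b c) h p q = (if p = a \<and> b \<le> q then c * h b q else 0)"
proof -
  have "inc_mult X (inc_single a b c) h p q
      = (\<Sum>t\<in>{t\<in>X. p \<le> t \<and> t \<le> q}. if t = b then (if p = a then c * h t q else 0) else 0)"
    unfolding inc_mult_def inc_single_def by (intro sum.cong) auto
  also have "\<dots> = (if p = a \<and> b \<le> q then c * h b q else 0)"
    using assms by (simp add: sum.delta)
  finally show ?thesis .
qed

lemma inc_mult_single_right:
  assumes "finite X" "a \<in> X" "a \<le> b"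
  shows "inc_mult X h (inc_single a b c) p q = (if q = b \<and> p \<le> a then h p a * c else 0)"
proof -
  have "inc_mult X h (inc_single a b c) p q
      = (\<Sum>t\<in>{t\<in>X. p \<le> t \<and> t \<le> q}. if t = a then (if q = b then h p t * c else 0) else 0)"
    unfolding inc_mult_def inc_single_def by (intro sum.cong) auto
  also have "\<dots> = (if q = b \<and> p \<le> a then h p a * c else 0)"
    using assms by (simp add: sum.delta)
  finally show ?thesis .
qed

lemma inc_bracket_unit:
  assumes "finite X" "a \<in> X" "b \<in> X" "a \<le> b"
  shows "inc_bracket X (inc_single a b 1) h p q
    = (if p = a \<and> b \<le> q then h b q else 0) - (if q = b \<and> p \<le> a then h p a else 0)"
  using assms by (simp add: inc_bracket_def inc_mult_single_left inc_mult_single_right)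

lemma inc_subspace_zero: "inc_subspace X L \<Longrightarrow> (\<lambda>x y. 0) \<in> L"
  unfolding inc_subspace_def by blast

lemma inc_subspace_add:
  "inc_subspace X L \<Longrightarrow> f \<in> L \<Longrightarrow> g \<in> L \<Longrightarrow> (\<lambda>x y. f x y + g x y) \<in> L"
  unfolding inc_subspace_def by blast

lemma inc_subspace_scale: "inc_subspace X L \<Longrightarrow> f \<in> L \<Longrightarrow> (\<lambda>x y. c * f x y) \<in> L"
  unfolding inc_subspace_def by blast

lemma inc_subspace_diff:
  assumes "inc_subspace X L" "f \<in> L" "g \<in> L"
  shows "(\<lambda>x y. f x y - g x y) \<in> L"
  using inc_subspace_add[OF assms(1,2) inc_subspace_scale[OF assms(1,3), of "-1"]] by simp

lemma inc_subspace_sum: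
  assumes "inc_subspace X L" "finite I" "\<And>i. i \<in> I \<Longrightarrow> F i \<in> L"
  shows "(\<lambda>x y. \<Sum>i\<in>I. F i x y) \<in> L"
  using assms(2,3)
proof (induction I rule: finite_induct)
  case empty
  then show ?case using inc_subspace_zero[OF assms(1)] by simp
next
  case (insert i I)
  then show ?case using inc_subspace_add[OF assms(1), of "F i"] by simp
qed

lemma inc_lie_ideal_subspace: "inc_lie_ideal X L \<Longrightarrow> inc_subspace X L"
  unfolding inc_lie_ideal_def by blast

lemma inc_lie_ideal_bracket:
  "inc_lie_ideal X L \<Longrightarrow> g \<in> incidence X \<Longrightarrow> f \<in> L \<Longrightarrow> inc_bracket X g f \<in> L"
  unfolding inc_lie_ideal_def by blast

lemma inc_ideal_imp_lie_ideal:
  fixes A :: "('a::order \<Rightarrow> 'a \<Rightarrow> 'k::field) set"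
  assumes "inc_ideal X A"
  shows "inc_lie_ideal X A"
  unfolding inc_lie_ideal_def
proof (intro conjI ballI)
  show sub: "inc_subspace X A" using assms by (simp add: inc_ideal_def)
  fix f g :: "'a \<Rightarrow> 'a \<Rightarrow> 'k"
  assume "f \<in> incidence X" "g \<in> A"
  then have "inc_mult X f g \<in> A" "inc_mult X g f \<in> A"
    using assms by (auto simp: inc_ideal_def)
  then show "inc_bracket X f g \<in> A"
    unfolding inc_bracket_def by (rule inc_subspace_diff[OF sub])
qed

lemma inc_lie_ideal_Inter:
  assumes "F \<noteq> {}" "\<And>A. A \<in> F \<Longrightarrow> inc_lie_ideal X A"
  shows "inc_lie_ideal X (\<Inter>F)"
  using assms unfolding inc_lie_ideal_def inc_subspace_def by blast

lemma jacobson_lie_ideal: "inc_lie_ideal X (jacobson X :: ('a::order \<Rightarrow> 'a \<Rightarrow> 'k::field) set)"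
  unfolding inc_lie_ideal_def inc_subspace_def
proof (intro conjI ballI allI)
  fix f g :: "'a \<Rightarrow> 'a \<Rightarrow> 'k" and c
  assume f: "f \<in> jacobson X"
  then show "(\<lambda>x y. c * f x y) \<in> jacobson X"
    by (simp add: jacobson_def incidence_scale)
  assume g: "g \<in> jacobson X"
  with f show "(\<lambda>x y. f x y + g x y) \<in> jacobson X"
    by (simp add: jacobson_def incidence_add)
next
  fix f g :: "'a \<Rightarrow> 'a \<Rightarrow> 'k"
  assume f: "f \<in> incidence X" and g: "g \<in> jacobson X"
  then have g': "g \<in> incidence X" by (simp add: jacobson_def)
  have "(\<lambda>x y. inc_mult X f g x y + (-1) * inc_mult X g f x y) \<in> incidence X"
    by (intro incidence_add incidence_scale inc_mult_in_incidence f g')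
  then show "inc_bracket X f g \<in> jacobson X"
    using g by (simp add: jacobson_def inc_bracket_def inc_mult_diag)
qed (auto simp: jacobson_def incidence_def)

lemma inc_lie_ideal_single_entry:
  assumes fin: "finite X" and L: "inc_lie_ideal X L" and f: "f \<in> L"
    and xy: "x \<in> X" "y \<in> X" "x < y"
  shows "inc_single x y (f x y) \<in> L"
proof -
  have "f \<in> incidence X"
    using f L by (auto simp: inc_lie_ideal_def inc_subspace_def)
  then have fyx: "f y x = 0"
    using xy(3) unfolding incidence_def by force
  define g where "g = inc_bracket X (inc_single x x 1) f"
  define h where "h = inc_bracket X (inc_single y y 1) g"
  have "h \<in> L"
    unfolding h_def g_def using xy
    by (intro inc_lie_ideal_bracket[OF L] inc_single_in_incidence f) auto
  moreover have "h = (\<lambda>u v. (-1) * inc_single x y (f x y) u v)"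
    unfolding h_def g_def using fin xy fyx
    by (intro ext) (simp add: inc_bracket_unit, auto simp: inc_single_def dest: order.antisym)
  ultimately have "(\<lambda>u v. (-1) * ((-1) * inc_single x y (f x y) u v)) \<in> L"
    using inc_subspace_scale[OF inc_lie_ideal_subspace[OF L]] by blast
  then show ?thesis by simp
qed

lemma inc_lie_ideal_single_shift:
  assumes fin: "finite X" and L: "inc_lie_ideal X L" and s: "inc_single x y c \<in> L"
    and xy: "x \<in> X" "x < y" and a: "a \<in> X" "a \<le> x"
  shows "inc_single a y c \<in> L"
proof -
  have "inc_bracket X (inc_single a x 1) (inc_single x y c) \<in> L"
    using a xy by (intro inc_lie_ideal_bracket[OF L] inc_single_in_incidence s) auto
  moreover have "inc_bracket X (inc_single a x 1) (inc_single x y c) = inc_single a y c"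
    using fin a xy by (intro ext) (simp add: inc_bracket_unit, auto simp: inc_single_def)
  ultimately show ?thesis by simp
qed

lemma inc_lie_ideal_product_term:
  assumes fin: "finite X" and L: "inc_lie_ideal X L" and LJ: "L \<subseteq> jacobson X"
    and f: "f \<in> L" and g: "g \<in> incidence X" and abc: "a \<in> X" "b \<in> X" "c \<in> X"
  shows "inc_single a c (g a b * f b c) \<in> L"
proof (cases "a \<le> b \<and> b < c")
  case True
  have "inc_single b c (f b c) \<in> L"
    using True abc by (intro inc_lie_ideal_single_entry[OF fin L f]) auto
  then have "inc_single a c (f b c) \<in> L"
    by (rule inc_lie_ideal_single_shift[OF fin L]) (use True abc in auto)
  from inc_subspace_scale[OF inc_lie_ideal_subspace[OF L] this, of "g a b"]
  show ?thesis by (simp add: inc_single_def if_distrib cong: if_cong)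
next
  case False
  have f': "f \<in> jacobson X" using f LJ by blast
  consider "\<not> a \<le> b" | "b = c" | "\<not> b \<le> c"
    using False order.order_iff_strict by blast
  then have product_zero: "g a b * f b c = 0"
  proof cases
    case 1
    then have "g a b = 0" using g unfolding incidence_def by blast
    then show ?thesis by simp
  next
    case 2
    then show ?thesis using f' abc(2) by (simp add: jacobson_def)
  next
    case 3
    then have "f b c = 0" using f' unfolding jacobson_def incidence_def by blast
    then show ?thesis by simp
  qed
  show ?thesis
    unfolding product_zero inc_single_zero by (rule inc_subspace_zero[OF inc_lie_ideal_subspace[OF L]])
qed

lemma inc_lie_ideal_mult_left:
  assumes fin: "finite X" and L: "inc_lie_ideal X L" and LJ: "L \<subseteq> jacobson X"
    and f: "f \<in> L" and g: "g \<in> incidence X"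
  shows "inc_mult X g f \<in> L"
proof -
  have sub: "inc_subspace X L" using L by (rule inc_lie_ideal_subspace)
  have f': "f \<in> incidence X" using f LJ by (auto simp: jacobson_def)
  have "inc_single a c (inc_mult X g f a c) \<in> L" if "a \<in> X" "c \<in> X" for a c
    unfolding inc_mult_eq_sum[OF fin g f'] inc_single_sum
    using fin that by (intro inc_subspace_sum[OF sub] inc_lie_ideal_product_term[OF assms]) auto
  then have "(\<lambda>p q. \<Sum>a\<in>X. \<Sum>c\<in>X. inc_single a c (inc_mult X g f a c) p q) \<in> L"
    using fin by (intro inc_subspace_sum[OF sub]) auto
  then show ?thesis
    using incidence_sum_single[OF fin inc_mult_in_incidence[OF g f']] by simp
qed

lemma inc_lie_ideal_in_jacobson_imp_ideal:
  fixes L :: "('a::order \<Rightarrow> 'a \<Rightarrow> 'k::field) set"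
  assumes fin: "finite X" and L: "inc_lie_ideal X L" and LJ: "L \<subseteq> jacobson X"
  shows "inc_ideal X L"
  unfolding inc_ideal_def
proof (intro conjI ballI)
  show sub: "inc_subspace X L" using L by (rule inc_lie_ideal_subspace)
  fix g f :: "'a \<Rightarrow> 'a \<Rightarrow> 'k"
  assume g: "g \<in> incidence X" and f: "f \<in> L"
  show gf: "inc_mult X g f \<in> L"
    using inc_lie_ideal_mult_left[OF assms f g] .
  have "(\<lambda>x y. inc_mult X g f x y - inc_bracket X g f x y) \<in> L"
    by (rule inc_subspace_diff[OF sub gf inc_lie_ideal_bracket[OF L g f]])
  then show "inc_mult X f g \<in> L"
    by (simp add: inc_bracket_def)
qed

theorem corollary3p5:
  fixes X :: "'a::order set" and S :: "('a \<Rightarrow> 'a \<Rightarrow> 'k::field) set"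
  assumes "finite X" and "poset_connected X" and "S \<subseteq> jacobson X"
  shows "ideal_gen X S = lie_ideal_gen X S \<and>
    (\<forall>L::('a \<Rightarrow> 'a \<Rightarrow> 'k) set. inc_lie_ideal X L \<and> L \<subseteq> jacobson X \<longrightarrow> inc_ideal X L)"
proof
  show lie_ideals: "\<forall>L::('a \<Rightarrow> 'a \<Rightarrow> 'k) set. inc_lie_ideal X L \<and> L \<subseteq> jacobson X \<longrightarrow> inc_ideal X L"
    using inc_lie_ideal_in_jacobson_imp_ideal[OF assms(1)] by blast
  have J: "jacobson X \<in> {A. inc_lie_ideal X A \<and> S \<subseteq> A}"
    using jacobson_lie_ideal assms(3) by blast
  then have "inc_lie_ideal X (lie_ideal_gen X S)"
    unfolding lie_ideal_gen_def by (intro inc_lie_ideal_Inter) auto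
  moreover have "lie_ideal_gen X S \<subseteq> jacobson X"
    unfolding lie_ideal_gen_def using J by blast
  ultimately have "inc_ideal X (lie_ideal_gen X S)"
    using lie_ideals by blast
  then have "ideal_gen X S \<subseteq> lie_ideal_gen X S"
    unfolding ideal_gen_def lie_ideal_gen_def by blast
  moreover have "lie_ideal_gen X S \<subseteq> ideal_gen X S"
    unfolding ideal_gen_def lie_ideal_gen_def using inc_ideal_imp_lie_ideal by blast
  ultimately show "ideal_gen X S = lie_ideal_gen X S" by blast
qed

end
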